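(* Let $v>71$ and let $(X,\mathcal{B})$ be an STS$(v)$ with $X=\{1,\dots,v\}$. Then there is a sequencing $\pi=[x_1\,x_2\,\cdots\,x_v]$ of $X$ that is $4$-good for $(X,\mathcal{B})$, i.e. for every $1\le i\le v-3$, the set $\{x_i,x_{i+1},x_{i+2},x_{i+3}\}$ contains no block of $\mathcal{B}$.
   Context: A Steiner triple system of order $v$, STS$(v)$, is a pair $(X,\mathcal{B})$ where $X$ is a set of $v$ points and $\mathcal{B}$ is a set of 3-subsets of $X$ (blocks) such that every pair of distinct points lies in exactly one block. A sequencing of $X$ is an ordering $[x_1\,x_2\,\cdots\,x_v]$ of all points of $X$, each appearing exactly once. For an integer $\ell$, a sequencing is $\ell$-good if no $\ell$ consecutive points of it contain a block of $\mathcal{B}$. *)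

theory Defs
  imports Main
begin

definition steiner_triple_system :: "'a set \<Rightarrow> 'a set set \<Rightarrow> bool" where
  "steiner_triple_system X B \<longleftrightarrow>
     (\<forall>b\<in>B. b \<subseteq> X \<and> card b = 3) \<and>
     (\<forall>x\<in>X. \<forall>y\<in>X. x \<noteq> y \<longrightarrow> (\<exists>!b. b \<in> B \<and> {x, y} \<subseteq> b))"

definition sequencing :: "'a set \<Rightarrow> 'a list \<Rightarrow> bool" where
  "sequencing X xs \<longleftrightarrow> distinct xs \<and> set xs = X"

definition good_sequencing :: "nat \<Rightarrow> 'a set set \<Rightarrow> 'a list \<Rightarrow> bool" where
  "good_sequencing l B xs \<longleftrightarrow>
     (\<forall>i. i + l \<le> length xs \<longrightarrow> (\<forall>b\<in>B. \<not> b \<subseteq> set (take l (drop i xs))))"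

end

theory Submission
  imports Defs
begin

text \<open>Build the sequencing as a partial sequence in which no block lies inside a window of
four consecutive positions, and take one of maximal length which, among those, has the fewest
open pairs: entries at distance at most 3 whose third point is not yet used.
Every missing point is then blocked at the end of the sequence, and only three pairs share a
window with the end, so at most three points are missing. If a point y is missing, moving an
entry to the end and putting y in its place shows that y is blocked at all but a few positions;
hence y completes at least 17 close pairs, with 34 distinct endpoints. By averaging, one such
endpoint t is itself blocked at few positions, and exchanging the entry at t with a suitable
entry far away yields a sequence of the same length with fewer open pairs. The hypothesis
v > 71 is what makes these counts work out.\<close>

text \<open>Pairwise distance at most 3 means that the three positions fit into one window of four
consecutive positions.\<close>
definition window_triple :: "nat \<Rightarrow> nat \<Rightarrow> nat \<Rightarrow> bool" where
  "window_triple a b c \<longleftrightarrow> a \<noteq> b \<and> a \<noteq> c \<and> b \<noteq> c \<and> a \<le> b + 3 \<and> b \<le> a + 3 \<and>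
     a \<le> c + 3 \<and> c \<le> a + 3 \<and> b \<le> c + 3 \<and> c \<le> b + 3"

lemma window_triple_commute:
  "window_triple a b c \<longleftrightarrow> window_triple b a c"
  "window_triple a b c \<longleftrightarrow> window_triple a c b"
  unfolding window_triple_def by auto

lemma finite_window_pairs: "finite {(a, b). a < b \<and> window_triple a b p}"
proof -
  have "{(a, b). a < b \<and> window_triple a b p} \<subseteq> {..p + 3} \<times> {..p + 3}"
    by (auto simp: window_triple_def)
  then show ?thesis by (rule finite_subset) auto
qed

lemma card_window_pairs_le: "card {(a, b). a < b \<and> window_triple a b p} \<le> 9"
  (is "card ?P \<le> 9")
proof -
  let ?shift = "\<lambda>(a, b). (a + 3 - p, b + 3 - p)"
  let ?Q = "{(0,1), (0,2), (1,2), (1,4), (2,4), (2,5), (4,5), (4,6), (5,6)} :: (nat \<times> nat) set"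
  have inj: "inj_on ?shift ?P" by (auto simp: inj_on_def window_triple_def)
  have image: "?shift ` ?P \<subseteq> ?Q"
  proof
    fix x assume "x \<in> ?shift ` ?P"
    then obtain a b where "a < b" "window_triple a b p" and x_eq: "x = (a + 3 - p, b + 3 - p)" by auto
    moreover define a' b' where "a' = a + 3 - p" and "b' = b + 3 - p"
    ultimately have "a' < b'" "b' \<le> 6" "a' \<noteq> 3" "b' \<noteq> 3" "b' \<le> a' + 3"
      unfolding window_triple_def by auto
    then have "(a', b') \<in> ?Q"
      by (auto simp: le_Suc_eq numeral_eq_Suc)
    then show "x \<in> ?Q" by (simp add: x_eq a'_def b'_def)
  qed
  have "card ?P = card (?shift ` ?P)" using inj by (simp add: card_image)
  also have "\<dots> \<le> card ?Q" by (rule card_mono) (use image in auto)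
  finally show ?thesis by simp
qed

lemma card_window_pairs_before_le: "card {(a, b). a < b \<and> b < p \<and> window_triple a b p} \<le> 3"
  (is "card ?P \<le> 3")
proof -
  let ?shift = "\<lambda>(a, b). (a + 3 - p, b + 3 - p)"
  let ?Q = "{(0,1), (0,2), (1,2)} :: (nat \<times> nat) set"
  have inj: "inj_on ?shift ?P" by (auto simp: inj_on_def window_triple_def)
  have image: "?shift ` ?P \<subseteq> ?Q"
  proof
    fix x assume "x \<in> ?shift ` ?P"
    then obtain a b where "a < b" "b < p" "window_triple a b p" and x_eq: "x = (a + 3 - p, b + 3 - p)"
      by auto
    moreover define a' b' where "a' = a + 3 - p" and "b' = b + 3 - p"
    ultimately have "a' < b'" "b' < 3"
      unfolding window_triple_def by auto
    then have "(a', b') \<in> ?Q"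
      by (auto simp: less_Suc_eq numeral_eq_Suc)
    then show "x \<in> ?Q" by (simp add: x_eq a'_def b'_def)
  qed
  have "card ?P = card (?shift ` ?P)" using inj by (simp add: card_image)
  also have "\<dots> \<le> card ?Q" by (rule card_mono) (use image in auto)
  finally show ?thesis by simp
qed

lemma card_window_completions_le:
  assumes "a < b" "b \<le> a + 3"
  shows "card {j. window_triple a b j} \<le> 4"
proof -
  have "{j. window_triple a b j} \<subseteq> {b - 3..a + 3} - {a, b}"
    by (auto simp: window_triple_def)
  moreover have "card ({b - 3..a + 3} - {a, b}) \<le> 4"
    using assms by (simp add: card_Diff_subset)
  ultimately show ?thesis
    by (meson card_mono finite_Diff finite_atLeastAtMost le_trans)
qed

lemma card_positions_le:
  assumes "distinct s" "finite A"
  shows "card {i. i < length s \<and> s ! i \<in> A} \<le> card A"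
  by (rule card_inj_on_le[OF inj_on_nth[OF assms(1)]]) (use assms(2) in auto)

definition near_positions :: "nat \<Rightarrow> nat set" where
  "near_positions c = {c - 3..c + 3}"

lemma mem_near_positions_iff [simp]: "q \<in> near_positions c \<longleftrightarrow> q \<le> c + 3 \<and> c \<le> q + 3"
  by (auto simp: near_positions_def)

lemma finite_near_positions [simp]: "finite (near_positions c)"
  by (simp add: near_positions_def)

lemma card_near_positions_le: "card (near_positions c) \<le> 7"
  by (simp add: near_positions_def)

lemma card_near_positions_Un_le:
  assumes "t \<le> t' + 3" "t' \<le> t + 3"
  shows "card (near_positions t \<union> near_positions t') \<le> 10"
proof -
  have "near_positions t \<union> near_positions t' \<subseteq> {min t t' - 3..min t t' + 6}" using assms by auto
  moreover have "card {min t t' - 3..min t t' + 6} \<le> 10" by simp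
  ultimately show ?thesis by (meson card_mono finite_atLeastAtMost le_trans)
qed

locale finite_steiner_triple_system =
  fixes X :: "'a set" and B :: "'a set set"
  assumes sts: "steiner_triple_system X B" and finite_points: "finite X"
begin

lemma block_subset_card: "b \<in> B \<Longrightarrow> b \<subseteq> X \<and> card b = 3"
  using sts unfolding steiner_triple_system_def by blast

lemma pair_in_unique_block:
  assumes "a \<in> X" "b \<in> X" "a \<noteq> b"
  obtains c where "c \<in> X" "c \<noteq> a" "c \<noteq> b" "\<And>c'. {a, b, c'} \<in> B \<longleftrightarrow> c' = c"
proof -
  have "\<exists>!k. k \<in> B \<and> {a, b} \<subseteq> k"
    using sts assms unfolding steiner_triple_system_def by simp
  then obtain k where k: "k \<in> B" "{a, b} \<subseteq> k"
    and unique: "\<And>k'. k' \<in> B \<Longrightarrow> {a, b} \<subseteq> k' \<Longrightarrow> k' = k"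
    by (rule ex1E) blast
  have "card (k - {a, b}) = 1"
    using block_subset_card[OF k(1)] k(2) assms(3) by (simp add: card_Diff_subset)
  then obtain c where c: "k - {a, b} = {c}" by (auto simp: card_Suc_eq)
  then have k_eq: "k = {a, b, c}" using k(2) by auto
  have "{a, b, c'} \<in> B \<longleftrightarrow> c' = c" for c'
  proof
    assume block: "{a, b, c'} \<in> B"
    have "c' \<notin> {a, b}"
    proof
      assume "c' \<in> {a, b}"
      then have "{a, b, c'} = {a, b}" by auto
      then show False using block_subset_card[OF block] assms(3) by simp
    qed
    moreover have "{a, b, c'} = {a, b, c}" using unique[OF block] k_eq by auto
    ultimately show "c' = c" by blast
  qed (use k k_eq in simp)
  moreover have "c \<in> X" "c \<noteq> a" "c \<noteq> b"
    using c k_eq block_subset_card[OF k(1)] by auto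
  ultimately show thesis using that by blast
qed

definition third :: "'a \<Rightarrow> 'a \<Rightarrow> 'a" where
  "third a b = (THE c. {a, b, c} \<in> B)"

lemma third_block:
  assumes "a \<in> X" "b \<in> X" "a \<noteq> b"
  shows "{a, b, c} \<in> B \<longleftrightarrow> c = third a b" "third a b \<in> X" "third a b \<noteq> a" "third a b \<noteq> b"
proof -
  obtain c0 where c0: "c0 \<in> X" "c0 \<noteq> a" "c0 \<noteq> b" "\<And>c'. {a, b, c'} \<in> B \<longleftrightarrow> c' = c0"
    using pair_in_unique_block[OF assms] by blast
  then have third_eq: "third a b = c0" unfolding third_def by blast
  then show "{a, b, c} \<in> B \<longleftrightarrow> c = third a b" using c0(4) by simp
  show "third a b \<in> X" "third a b \<noteq> a" "third a b \<noteq> b" using c0 third_eq by auto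
qed

lemma third_commute: "third a b = third b a"
  unfolding third_def by (simp add: insert_commute)

lemma third_third:
  assumes "a \<in> X" "b \<in> X" "a \<noteq> b"
  shows "third b (third a b) = a"
proof -
  have "{b, a, third a b} \<in> B"
    using third_block(1)[OF assms, of "third a b"] by (simp add: insert_commute)
  then have "{b, third a b, a} \<in> B" by (simp add: insert_commute)
  then show ?thesis
    using third_block(1)[OF assms(2) third_block(2)[OF assms] third_block(4)[OF assms, symmetric]]
    by simp
qed

lemma third_inj:
  assumes "a \<in> X" "b \<in> X" "b' \<in> X" "a \<noteq> b" "a \<noteq> b'" "third a b = third a b'"
  shows "b = b'"
  by (metis assms third_commute third_third)

definition partial_good :: "'a list \<Rightarrow> bool" where
  "partial_good s \<longleftrightarrow> distinct s \<and> set s \<subseteq> X \<and>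
     (\<forall>a b c. a < length s \<longrightarrow> b < length s \<longrightarrow> c < length s \<longrightarrow> window_triple a b c \<longrightarrow>
        {s ! a, s ! b, s ! c} \<notin> B)"

definition blocked :: "'a list \<Rightarrow> nat \<Rightarrow> 'a set" where
  "blocked s p = (\<lambda>(a, b). third (s ! a) (s ! b)) `
     {(a, b). a < b \<and> b < length s \<and> window_triple a b p}"

lemma finite_blocked: "finite (blocked s p)"
  unfolding blocked_def
  by (rule finite_imageI, rule finite_subset[OF _ finite_window_pairs[of p]]) auto

lemma card_blocked_le: "card (blocked s p) \<le> 9"
proof -
  let ?P = "{(a, b). a < b \<and> b < length s \<and> window_triple a b p}"
  have "?P \<subseteq> {(a, b). a < b \<and> window_triple a b p}" by auto
  then have "card ?P \<le> 9"
    using card_mono[OF finite_window_pairs] card_window_pairs_le le_trans by blast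
  moreover have "card (blocked s p) \<le> card ?P"
    unfolding blocked_def
    by (rule card_image_le, rule finite_subset[OF _ finite_window_pairs[of p]]) auto
  ultimately show ?thesis by simp
qed

lemma card_blocked_end_le: "card (blocked s (length s)) \<le> 3"
proof -
  let ?P = "{(a, b). a < b \<and> b < length s \<and> window_triple a b (length s)}"
  have "finite ?P"
    by (rule finite_subset[OF _ finite_window_pairs[of "length s"]]) auto
  then have "card (blocked s (length s)) \<le> card ?P"
    unfolding blocked_def by (rule card_image_le)
  then show ?thesis using card_window_pairs_before_le[of "length s"] by simp
qed

lemma partial_good_nth_mem: "partial_good s \<Longrightarrow> i < length s \<Longrightarrow> s ! i \<in> X"
  unfolding partial_good_def by (meson nth_mem subsetD)

lemma partial_good_nth_eq_iff:
  "partial_good s \<Longrightarrow> i < length s \<Longrightarrow> j < length s \<Longrightarrow> s ! i = s ! j \<longleftrightarrow> i = j"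
  unfolding partial_good_def by (simp add: nth_eq_iff_index_eq)

lemma not_block_if_not_blocked:
  assumes s: "partial_good s" and z: "z \<notin> blocked s p"
    and ab: "a < length s" "b < length s" "window_triple a b p"
  shows "{s ! a, s ! b, z} \<notin> B"
proof
  assume block: "{s ! a, s ! b, z} \<in> B"
  have blocked_if: "z \<in> blocked s p"
    if "a < b" "b < length s" "window_triple a b p" "{s ! a, s ! b, z} \<in> B" for a b
  proof -
    have "z = third (s ! a) (s ! b)"
      using that third_block(1) partial_good_nth_mem[OF s] partial_good_nth_eq_iff[OF s] by simp
    then show ?thesis
      unfolding blocked_def using that by (intro image_eqI[where x = "(a, b)"]) auto
  qed
  have "a \<noteq> b" using ab(3) by (simp add: window_triple_def)
  then consider "a < b" | "b < a" by linarith
  then show False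
  proof cases
    case 1
    then show False using blocked_if[of a b] ab block z by blast
  next
    case 2
    then show False
      using blocked_if[of b a] ab block z window_triple_commute(1) by (simp add: insert_commute)
  qed
qed

lemma partial_good_replace:
  assumes s: "partial_good s" and s': "distinct s'" "set s' \<subseteq> X"
    and unchanged: "\<And>i. i < length s' \<Longrightarrow> i \<notin> C \<Longrightarrow> i < length s \<and> s' ! i = s ! i"
    and apart: "\<And>p p'. p \<in> C \<Longrightarrow> p' \<in> C \<Longrightarrow> p < p' \<Longrightarrow> p + 3 < p'"
    and unblocked: "\<And>p. p \<in> C \<Longrightarrow> p < length s' \<Longrightarrow> s' ! p \<notin> blocked s p"
  shows "partial_good s'"
proof -
  have at_changed: "{s' ! a, s' ! b, s' ! c} \<notin> B"
    if abc: "a < length s'" "b < length s'" "c < length s'" "window_triple a b c" and "c \<in> C"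
    for a b c
  proof -
    have "a \<notin> C" "b \<notin> C"
      using abc(4) apart[OF \<open>c \<in> C\<close>] apart[OF _ \<open>c \<in> C\<close>]
      unfolding window_triple_def by (metis add_lessD1 less_le_trans nat_neq_iff not_le)+
    then have "a < length s" "b < length s" "s' ! a = s ! a" "s' ! b = s ! b"
      using unchanged abc by auto
    then show ?thesis
      using not_block_if_not_blocked[OF s unblocked[OF \<open>c \<in> C\<close> abc(3)]] abc(4) by simp
  qed
  show ?thesis
    unfolding partial_good_def
  proof (intro conjI allI impI)
    fix a b c
    assume abc: "a < length s'" "b < length s'" "c < length s'" "window_triple a b c"
    consider "c \<in> C" | "a \<in> C" | "b \<in> C" | "a \<notin> C" "b \<notin> C" "c \<notin> C" by blast
    then show "{s' ! a, s' ! b, s' ! c} \<notin> B"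
    proof cases
      case 1
      then show ?thesis using at_changed abc by blast
    next
      case 2
      then show ?thesis
        using at_changed[of b c a] abc window_triple_commute by (metis insert_commute)
    next
      case 3
      then show ?thesis
        using at_changed[of a c b] abc window_triple_commute by (metis insert_commute)
    next
      case 4
      then show ?thesis using s abc unchanged unfolding partial_good_def by auto
    qed
  qed (use s' in auto)
qed

lemma partial_good_append:
  assumes "partial_good s" "y \<in> X" "y \<notin> set s" "y \<notin> blocked s (length s)"
  shows "partial_good (s @ [y])"
  by (rule partial_good_replace[OF assms(1), where C = "{length s}"])
    (use assms in \<open>auto simp: nth_append partial_good_def\<close>)

lemma partial_good_move_to_end:
  assumes s: "partial_good s" and y: "y \<in> X" "y \<notin> set s" "y \<notin> blocked s j"
    and j: "j + 3 < length s" and moved: "s ! j \<notin> blocked s (length s)"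
  shows "partial_good (s[j := y] @ [s ! j])"
proof (rule partial_good_replace[OF s, where C = "{j, length s}"])
  have "distinct s" "set s \<subseteq> X" using s unfolding partial_good_def by auto
  moreover have "set (s[j := y]) = insert y (set s - {s ! j})"
    by (rule set_update_distinct) (use \<open>distinct s\<close> j in auto)
  moreover have "s ! j \<in> set s" using j by simp
  ultimately show "distinct (s[j := y] @ [s ! j])" "set (s[j := y] @ [s ! j]) \<subseteq> X"
    using y by (auto simp: distinct_list_update)
qed (use j y moved in \<open>auto simp: nth_append\<close>)

lemma partial_good_swap:
  assumes s: "partial_good s" and "t < length s" "q < length s" "t + 3 < q \<or> q + 3 < t"
    and "s ! q \<notin> blocked s t" "s ! t \<notin> blocked s q"
  shows "partial_good (s[t := s ! q, q := s ! t])"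
  by (rule partial_good_replace[OF s, where C = "{t, q}"])
    (use assms in \<open>auto simp: partial_good_def\<close>)

lemma sum_card_blocking_positions_le:
  assumes "distinct s"
  shows "(\<Sum>t<length s. card {q. q < length s \<and> s ! t \<in> blocked s q}) \<le> 9 * length s"
proof -
  let ?m = "length s"
  have "(\<Sum>t<?m. card {q. q < ?m \<and> s ! t \<in> blocked s q})
      = (\<Sum>t<?m. \<Sum>q<?m. if s ! t \<in> blocked s q then 1 else 0)"
    by (rule sum.cong) (auto simp: sum.If_cases lessThan_def intro!: arg_cong[where f = card])
  also have "\<dots> = (\<Sum>q<?m. \<Sum>t<?m. if s ! t \<in> blocked s q then 1 else 0)"
    by (rule sum.swap)
  also have "\<dots> = (\<Sum>q<?m. card {t. t < ?m \<and> s ! t \<in> blocked s q})"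
    by (rule sum.cong) (auto simp: sum.If_cases lessThan_def intro!: arg_cong[where f = card])
  also have "\<dots> \<le> (\<Sum>q<?m. 9)"
    using card_positions_le[OF assms finite_blocked] card_blocked_le le_trans
    by (intro sum_mono) blast
  finally show ?thesis by simp
qed

definition open_pairs :: "'a list \<Rightarrow> (nat \<times> nat) set" where
  "open_pairs s = {(a, b). a < b \<and> b < length s \<and> b \<le> a + 3 \<and> third (s ! a) (s ! b) \<notin> set s}"

definition completed_pairs :: "'a list \<Rightarrow> 'a \<Rightarrow> (nat \<times> nat) set" where
  "completed_pairs s y = {(a, b). a < b \<and> b < length s \<and> b \<le> a + 3 \<and> third (s ! a) (s ! b) = y}"

lemma finite_open_pairs: "finite (open_pairs s)"
  by (rule finite_subset[of _ "{..<length s} \<times> {..<length s}"]) (auto simp: open_pairs_def)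

lemma finite_completed_pairs: "finite (completed_pairs s y)"
  by (rule finite_subset[of _ "{..<length s} \<times> {..<length s}"]) (auto simp: completed_pairs_def)

text \<open>The completed pairs of a point form a matching, because the third point of a block
determines the block from each of its points.\<close>
lemma completed_pairs_disjoint:
  assumes s: "partial_good s"
    and ab: "(a, b) \<in> completed_pairs s y" and cd: "(c, d) \<in> completed_pairs s y"
    and meet: "{a, b} \<inter> {c, d} \<noteq> {}"
  shows "(a, b) = (c, d)"
proof -
  have other_eq: "j = j'"
    if "i < length s" "j < length s" "j' < length s" "i \<noteq> j" "i \<noteq> j'"
      "third (s ! i) (s ! j) = third (s ! i) (s ! j')" for i j j'
    using that third_inj partial_good_nth_mem[OF s] partial_good_nth_eq_iff[OF s] by metis
  have a: "a < b" "b < length s" "third (s ! a) (s ! b) = y"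
    and c: "c < d" "d < length s" "third (s ! c) (s ! d) = y"
    using ab cd unfolding completed_pairs_def by auto
  from meet consider "a = c" | "a = d" | "b = c" | "b = d" by blast
  then show ?thesis
  proof cases
    case 1 then show ?thesis using other_eq[of a b d] a c by simp
  next
    case 2 then show ?thesis using other_eq[of a b c] a c by (simp add: third_commute)
  next
    case 3 then show ?thesis using other_eq[of b a d] a c by (simp add: third_commute)
  next
    case 4 then show ?thesis using other_eq[of b a c] a c by (simp add: third_commute)
  qed
qed

lemma card_completed_pairs_endpoints:
  assumes "partial_good s"
  shows "card (fst ` completed_pairs s y \<union> snd ` completed_pairs s y)
    = 2 * card (completed_pairs s y)"
proof -
  let ?P = "completed_pairs s y"
  have same: "e = e'" if "e \<in> ?P" "e' \<in> ?P" "{fst e, snd e} \<inter> {fst e', snd e'} \<noteq> {}" for e e'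
    using completed_pairs_disjoint[OF assms, of "fst e" "snd e" y "fst e'" "snd e'"] that by simp
  have "inj_on fst ?P" "inj_on snd ?P" by (rule inj_onI, rule same, auto)+
  moreover have "fst ` ?P \<inter> snd ` ?P = {}"
  proof (rule ccontr)
    assume "fst ` ?P \<inter> snd ` ?P \<noteq> {}"
    then obtain e e' where "e \<in> ?P" "e' \<in> ?P" "fst e = snd e'" by auto
    moreover from this have "e = e'" using same by blast
    ultimately show False by (auto simp: completed_pairs_def)
  qed
  ultimately show ?thesis
    using finite_completed_pairs by (simp add: card_Un_disjoint card_image)
qed

lemma card_open_pairs_swap_less:
  assumes t: "t < length s" "t' < length s" "t \<noteq> t'" "t \<le> t' + 3" "t' \<le> t + 3"
      "third (s ! t) (s ! t') \<notin> set s"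
    and q: "q < length s" "t + 3 < q \<or> q + 3 < t"
    and near_t: "\<And>c. c < length s \<Longrightarrow> c \<noteq> t \<Longrightarrow> c \<le> t + 3 \<Longrightarrow> t \<le> c + 3 \<Longrightarrow>
      third (s ! q) (s ! c) \<in> set s"
    and near_q: "\<And>c. c < length s \<Longrightarrow> c \<noteq> q \<Longrightarrow> c \<le> q + 3 \<Longrightarrow> q \<le> c + 3 \<Longrightarrow>
      third (s ! t) (s ! c) \<in> set s"
  shows "card (open_pairs (s[t := s ! q, q := s ! t])) < card (open_pairs s)"
proof -
  let ?s' = "s[t := s ! q, q := s ! t]" and ?e = "(min t t', max t t')"
  have nth': "?s' ! i = (if i = q then s ! t else if i = t then s ! q else s ! i)"
    if "i < length s" for i
    using that t(1) q by auto
  have closed_at_swapped: "third (?s' ! a) (?s' ! b) \<in> set s"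
    if "a < length s" "b < length s" "a \<noteq> b" "a \<le> b + 3" "b \<le> a + 3" "a \<in> {t, q}" for a b
    using that near_t[of b] near_q[of b] nth' q(2) by auto
  have "open_pairs ?s' \<subseteq> open_pairs s - {?e}"
  proof clarify
    fix a b assume "(a, b) \<in> open_pairs ?s'"
    then have ab: "a < b" "b < length s" "b \<le> a + 3" "third (?s' ! a) (?s' ! b) \<notin> set s"
      using t(1) q(1) by (auto simp: open_pairs_def)
    then have "a \<notin> {t, q}" "b \<notin> {t, q}"
      using closed_at_swapped[of a b] closed_at_swapped[of b a] by (auto simp: third_commute)
    then show "(a, b) \<in> open_pairs s - {?e}"
      using ab nth' by (auto simp: open_pairs_def min_def max_def)
  qed
  moreover have "?e \<in> open_pairs s"
    using t by (auto simp: open_pairs_def min_def max_def third_commute)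
  ultimately show ?thesis
    using finite_open_pairs
    by (meson card_Diff1_less card_mono finite_Diff le_less_trans)
qed

definition open_partners :: "'a list \<Rightarrow> nat \<Rightarrow> nat set" where
  "open_partners s t = {c. c < length s \<and> c \<noteq> t \<and> third (s ! t) (s ! c) \<notin> set s}"

lemma card_open_partners_le:
  assumes s: "partial_good s" and t: "t < length s"
  shows "card (open_partners s t) \<le> card (X - set s)"
proof -
  note mem = partial_good_nth_mem[OF s] and eq_iff = partial_good_nth_eq_iff[OF s]
  have "inj_on (\<lambda>c. third (s ! t) (s ! c)) (open_partners s t)"
  proof (rule inj_onI)
    fix c c' assume c: "c \<in> open_partners s t" "c' \<in> open_partners s t"
      "third (s ! t) (s ! c) = third (s ! t) (s ! c')"
    then have "s ! c = s ! c'"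
      using third_inj[of "s ! t" "s ! c" "s ! c'"] t mem eq_iff by (auto simp: open_partners_def)
    then show "c = c'" using c eq_iff by (auto simp: open_partners_def)
  qed
  moreover have "(\<lambda>c. third (s ! t) (s ! c)) ` open_partners s t \<subseteq> X - set s"
    using third_block(2) t mem eq_iff by (auto simp: open_partners_def)
  ultimately show ?thesis using card_inj_on_le finite_points by blast
qed

lemma card_near_open_partners_le:
  assumes s: "partial_good s" and missing: "card (X - set s) \<le> 3"
    and t: "t < length s" "t' \<in> open_partners s t" "t \<le> t' + 3" "t' \<le> t + 3"
  shows "card (near_positions t \<union> near_positions t' \<union>
    (\<Union>c \<in> open_partners s t - {t'}. near_positions c)) \<le> 24"
proof -
  let ?C = "open_partners s t - {t'}"
  have "finite (open_partners s t)" by (simp add: open_partners_def)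
  then have "card ?C \<le> 2"
    using t card_open_partners_le[OF s t(1)] missing by simp
  have "card (\<Union>c \<in> ?C. near_positions c) \<le> (\<Sum>c \<in> ?C. card (near_positions c))"
    by (rule card_UN_le) (use \<open>finite (open_partners s t)\<close> in simp)
  also have "\<dots> \<le> card ?C * 7"
    using sum_bounded_above[of ?C "\<lambda>c. card (near_positions c)" 7] card_near_positions_le by simp
  also have "\<dots> \<le> 14" using \<open>card ?C \<le> 2\<close> by simp
  finally show ?thesis
    using card_near_positions_Un_le[OF t(3,4)]
      card_Un_le[of "near_positions t \<union> near_positions t'" "\<Union>c \<in> ?C. near_positions c"]
    by linarith
qed

lemma card_positions_completing_near_le:
  assumes "distinct s" "finite M" "card M \<le> 3"
  shows "card {q. q < length s \<and> s ! q \<in> (\<lambda>(c, z). third (s ! c) z) ` ((near_positions t - {t}) \<times> M)}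
    \<le> 18"
proof -
  let ?W = "(\<lambda>(c, z). third (s ! c) z) ` ((near_positions t - {t}) \<times> M)"
  have "card ?W \<le> card ((near_positions t - {t}) \<times> M)"
    by (rule card_image_le) (simp add: assms(2))
  also have "\<dots> \<le> 6 * 3"
    unfolding card_cartesian_product using assms(3)
    by (intro mult_le_mono) (simp_all add: near_positions_def)
  finally show ?thesis
    using card_positions_le[OF assms(1), of ?W] assms(2) by simp
qed

text \<open>Positions whose entry must not be exchanged with the entry at t; the second line collects
those whose entry completes a missing point together with an entry near t.\<close>
definition swap_obstructions :: "'a list \<Rightarrow> nat \<Rightarrow> nat \<Rightarrow> nat set" where
  "swap_obstructions s t t' =
     near_positions t \<union> near_positions t' \<union> (\<Union>c \<in> open_partners s t - {t'}. near_positions c) \<union>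
     {q. q < length s \<and> s ! q \<in> (\<lambda>(c, z). third (s ! c) z) ` ((near_positions t - {t}) \<times> (X - set s))} \<union>
     {q. q < length s \<and> s ! q \<in> blocked s t} \<union> {q. q < length s \<and> s ! t \<in> blocked s q}"

lemma exists_position_outside_swap_obstructions:
  assumes s: "partial_good s" and missing: "card (X - set s) \<le> 3"
    and t: "t < length s" "t' < length s" "t \<noteq> t'" "t \<le> t' + 3" "t' \<le> t + 3"
      "third (s ! t) (s ! t') \<notin> set s"
    and rare: "card {q. q < length s \<and> s ! t \<in> blocked s q} + 51 \<le> length s"
  shows "\<exists>q < length s. q \<notin> swap_obstructions s t t'"
proof -
  let ?m = "length s" and ?M = "X - set s"
  note mem = partial_good_nth_mem[OF s] and eq_iff = partial_good_nth_eq_iff[OF s]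
  have distinct: "distinct s" using s by (simp add: partial_good_def)
  have "t' \<in> open_partners s t" using t by (simp add: open_partners_def)
  define Near where "Near = near_positions t \<union> near_positions t' \<union>
    (\<Union>c \<in> open_partners s t - {t'}. near_positions c)"
  define W where "W = (\<lambda>(c, z). third (s ! c) z) ` ((near_positions t - {t}) \<times> ?M)"
  define Through where "Through = {q. q < ?m \<and> s ! q \<in> W}"
  have "card Near \<le> 24" "card Through \<le> 18"
    using card_near_open_partners_le[OF s missing t(1) \<open>t' \<in> _\<close> t(4,5)]
      card_positions_completing_near_le[OF distinct _ missing] finite_points
    by (simp_all add: Near_def Through_def W_def)
  \<comment> \<open>The two sets overlap, since s ! t completes the missing point third (s ! t) (s ! t')
    with the entry at t'.\<close>
  have "t \<in> Near \<inter> Through"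
  proof -
    let ?y = "third (s ! t) (s ! t')"
    have "?y \<in> ?M" using t third_block(2) mem eq_iff by simp
    moreover have "s ! t = third (s ! t') ?y" using t third_third mem eq_iff by simp
    ultimately have "s ! t \<in> W"
      unfolding W_def using t by (intro image_eqI[where x = "(t', ?y)"]) auto
    then show ?thesis using t(1) by (simp add: Near_def Through_def)
  qed
  moreover have "finite Near" "finite Through" by (simp_all add: Near_def Through_def open_partners_def)
  ultimately have "card (Near \<inter> Through) \<ge> 1"
    by (metis One_nat_def Suc_leI card_gt_0_iff empty_iff finite_Int)
  then have "card (Near \<union> Through) \<le> 41"
    using card_Un_Int[OF \<open>finite Near\<close> \<open>finite Through\<close>] \<open>card Near \<le> 24\<close> \<open>card Through \<le> 18\<close>
    by linarith
  moreover have "card {q. q < ?m \<and> s ! q \<in> blocked s t} \<le> 9"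
    using card_positions_le[OF distinct finite_blocked] card_blocked_le le_trans by blast
  moreover have obstructions: "swap_obstructions s t t' = Near \<union> Through
      \<union> {q. q < ?m \<and> s ! q \<in> blocked s t} \<union> {q. q < ?m \<and> s ! t \<in> blocked s q}"
    by (simp add: swap_obstructions_def Near_def Through_def W_def)
  ultimately have "card (swap_obstructions s t t') < ?m"
    unfolding obstructions using rare card_Un_le[of "Near \<union> Through" "{q. q < ?m \<and> s ! q \<in> blocked s t}"]
      card_Un_le[of "Near \<union> Through \<union> {q. q < ?m \<and> s ! q \<in> blocked s t}"
        "{q. q < ?m \<and> s ! t \<in> blocked s q}"]
    by linarith
  moreover have "finite (swap_obstructions s t t')"
    using \<open>finite Near\<close> \<open>finite Through\<close> obstructions by simp
  ultimately show ?thesis using card_mono[of "swap_obstructions s t t'" "{..<?m}"] by force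
qed

lemma swap_partner_outside_obstructions:
  assumes s: "partial_good s" and t: "t < length s" "t' < length s"
    and q: "q < length s" "q \<notin> swap_obstructions s t t'"
  shows "t + 3 < q \<or> q + 3 < t" "s ! q \<notin> blocked s t" "s ! t \<notin> blocked s q"
    "\<And>c. c < length s \<Longrightarrow> c \<noteq> t \<Longrightarrow> c \<le> t + 3 \<Longrightarrow> t \<le> c + 3 \<Longrightarrow>
      third (s ! q) (s ! c) \<in> set s"
    "\<And>c. c < length s \<Longrightarrow> c \<noteq> q \<Longrightarrow> c \<le> q + 3 \<Longrightarrow> q \<le> c + 3 \<Longrightarrow>
      third (s ! t) (s ! c) \<in> set s"
proof -
  note mem = partial_good_nth_mem[OF s] and eq_iff = partial_good_nth_eq_iff[OF s]
  show far: "t + 3 < q \<or> q + 3 < t" using q by (auto simp: swap_obstructions_def)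
  show "s ! q \<notin> blocked s t" "s ! t \<notin> blocked s q" using q by (auto simp: swap_obstructions_def)
  show "third (s ! q) (s ! c) \<in> set s"
    if c: "c < length s" "c \<noteq> t" "c \<le> t + 3" "t \<le> c + 3" for c
  proof (rule ccontr)
    let ?z = "third (s ! q) (s ! c)"
    assume "?z \<notin> set s"
    have "q \<noteq> c" using far c by auto
    then have "?z \<in> X - set s" using \<open>?z \<notin> set s\<close> third_block(2) mem eq_iff q(1) c(1) by simp
    moreover have "s ! q = third (s ! c) ?z" using third_third mem eq_iff q(1) c(1) \<open>q \<noteq> c\<close> by simp
    ultimately have "s ! q \<in> (\<lambda>(c, z). third (s ! c) z) ` ((near_positions t - {t}) \<times> (X - set s))"
      using c by (intro image_eqI[where x = "(c, ?z)"]) auto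
    then show False using q by (simp add: swap_obstructions_def)
  qed
  show "third (s ! t) (s ! c) \<in> set s"
    if c: "c < length s" "c \<noteq> q" "c \<le> q + 3" "q \<le> c + 3" for c
  proof (rule ccontr)
    assume "third (s ! t) (s ! c) \<notin> set s"
    moreover have "c \<noteq> t" using far c by auto
    ultimately have "c \<in> open_partners s t" using c(1) by (simp add: open_partners_def)
    then show False using q c by (cases "c = t'") (auto simp: swap_obstructions_def)
  qed
qed

definition extremal :: "'a list \<Rightarrow> bool" where
  "extremal s \<longleftrightarrow> partial_good s \<and> (\<forall>s'. partial_good s' \<longrightarrow> length s' \<le> length s) \<and>
     (\<forall>s'. partial_good s' \<and> length s' = length s \<longrightarrow> card (open_pairs s) \<le> card (open_pairs s'))"

lemma extremal_partial_good: "extremal s \<Longrightarrow> partial_good s"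
  and extremal_longest: "extremal s \<Longrightarrow> partial_good s' \<Longrightarrow> length s' \<le> length s"
  and extremal_fewest_open_pairs: "extremal s \<Longrightarrow> partial_good s' \<Longrightarrow> length s' = length s \<Longrightarrow>
    card (open_pairs s) \<le> card (open_pairs s')"
  unfolding extremal_def by blast+

lemma extremal_exists: "\<exists>s. extremal s"
proof -
  have bounded: "length s < card X + 1" if "partial_good s" for s
  proof -
    have "distinct s" "set s \<subseteq> X" using that by (simp_all add: partial_good_def)
    then show ?thesis using card_mono[OF finite_points \<open>set s \<subseteq> X\<close>] distinct_card by fastforce
  qed
  have "partial_good []" by (simp add: partial_good_def)
  then obtain s0 where s0: "partial_good s0" "\<forall>s. partial_good s \<longrightarrow> length s \<le> length s0"
    using ex_has_greatest_nat[of partial_good "[]" length "card X + 1"] bounded by blast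
  then obtain s where "partial_good s \<and> length s = length s0"
    "\<forall>s'. partial_good s' \<and> length s' = length s0 \<longrightarrow> card (open_pairs s) \<le> card (open_pairs s')"
    using ex_has_least_nat[of "\<lambda>s. partial_good s \<and> length s = length s0" s0
        "\<lambda>s. card (open_pairs s)"]
    by blast
  then have "extremal s" unfolding extremal_def using s0(2) by simp
  then show ?thesis ..
qed

lemma extremal_missing_blocked_end:
  assumes "extremal s"
  shows "X - set s \<subseteq> blocked s (length s)"
proof
  fix z assume z: "z \<in> X - set s"
  show "z \<in> blocked s (length s)"
  proof (rule ccontr)
    assume "z \<notin> blocked s (length s)"
    then have "partial_good (s @ [z])"
      using partial_good_append extremal_partial_good[OF assms] z by blast
    then show False using extremal_longest[OF assms] by fastforce
  qed
qed

lemma extremal_card_missing_le: "extremal s \<Longrightarrow> card (X - set s) \<le> 3"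
  using card_mono[OF finite_blocked extremal_missing_blocked_end] card_blocked_end_le le_trans
  by blast

lemma extremal_moved_blocked_end:
  assumes "extremal s" "y \<in> X - set s" "j + 3 < length s" "y \<notin> blocked s j"
  shows "s ! j \<in> blocked s (length s)"
proof (rule ccontr)
  assume "s ! j \<notin> blocked s (length s)"
  then have "partial_good (s[j := y] @ [s ! j])"
    using partial_good_move_to_end extremal_partial_good[OF assms(1)] assms(2-4) by blast
  then show False using extremal_longest[OF assms(1)] by fastforce
qed

lemma extremal_missing_blocked_almost_everywhere:
  assumes s: "extremal s" and y: "y \<in> X - set s"
  shows "card X \<le> card {j. j < length s \<and> y \<in> blocked s j} + 6"
proof -
  let ?m = "length s" and ?M = "X - set s"
  define A where "A = blocked s ?m \<inter> set s"
  have "distinct s" "set s \<subseteq> X" using extremal_partial_good[OF s] by (simp_all add: partial_good_def)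
  then have card_missing: "card ?M = card X - ?m" "?m \<le> card X"
    using card_Diff_subset[OF finite_set \<open>set s \<subseteq> X\<close>] card_mono[OF finite_points \<open>set s \<subseteq> X\<close>]
    by (simp_all add: distinct_card)
  have "A \<union> ?M \<subseteq> blocked s ?m" "A \<inter> ?M = {}"
    using extremal_missing_blocked_end[OF s] by (auto simp: A_def)
  then have "card (A \<union> ?M) \<le> 3"
    using card_mono[OF finite_blocked] card_blocked_end_le[of s] le_trans by blast
  moreover have "card (A \<union> ?M) = card A + card ?M"
    using \<open>A \<inter> ?M = {}\<close> finite_points finite_blocked by (simp add: card_Un_disjoint A_def)
  ultimately have card_A: "card A + card ?M \<le> 3" by simp
  let ?S = "{j. j < ?m \<and> y \<in> blocked s j}" and ?J = "{j. j < ?m \<and> s ! j \<in> A}"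
  have "{..<?m - 3} \<subseteq> ?S \<union> ?J"
    using extremal_moved_blocked_end[OF s y] by (auto simp: A_def)
  then have "card {..<?m - 3} \<le> card (?S \<union> ?J)" by (rule card_mono[rotated]) simp
  then have "?m - 3 \<le> card ?S + card ?J" using card_Un_le[of ?S ?J] by simp
  moreover have "card ?J \<le> card A"
    using card_positions_le[OF \<open>distinct s\<close>] finite_blocked by (simp add: A_def del: Int_iff)
  ultimately show ?thesis using card_A card_missing by linarith
qed

lemma extremal_card_completed_pairs_ge:
  assumes s: "extremal s" and y: "y \<in> X - set s" and big: "71 < card X"
  shows "17 \<le> card (completed_pairs s y)"
proof -
  let ?P = "completed_pairs s y"
  let ?S = "{j. j < length s \<and> y \<in> blocked s j}"
  have "?S \<subseteq> (\<Union>e \<in> ?P. {j. window_triple (fst e) (snd e) j})"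
  proof
    fix j assume "j \<in> ?S"
    then obtain a b where "a < b" "b < length s" "window_triple a b j" "y = third (s ! a) (s ! b)"
      unfolding blocked_def by auto
    then have "(a, b) \<in> ?P" "window_triple a b j" by (auto simp: completed_pairs_def window_triple_def)
    then show "j \<in> (\<Union>e \<in> ?P. {j. window_triple (fst e) (snd e) j})" by force
  qed
  moreover have "finite {j. window_triple a b j}" for a b
    by (rule finite_subset[of _ "{..a + 3}"]) (auto simp: window_triple_def)
  ultimately have "card ?S \<le> card (\<Union>e \<in> ?P. {j. window_triple (fst e) (snd e) j})"
    using finite_completed_pairs by (intro card_mono) auto
  also have "\<dots> \<le> (\<Sum>e \<in> ?P. card {j. window_triple (fst e) (snd e) j})"
    by (rule card_UN_le[OF finite_completed_pairs])
  also have "\<dots> \<le> card ?P * 4"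
    using sum_bounded_above[of ?P "\<lambda>e. card {j. window_triple (fst e) (snd e) j}" 4]
      card_window_completions_le
    by (force simp: completed_pairs_def)
  finally show ?thesis
    using extremal_missing_blocked_almost_everywhere[OF s y] big by linarith
qed

text \<open>Averaging over the at least 34 endpoints of the completed pairs of a missing point,
each position blocking at most 9 points.\<close>
lemma extremal_obtain_rare_endpoint:
  assumes s: "extremal s" and y: "y \<in> X - set s" and big: "71 < card X"
  obtains t t' where "t < length s" "t' < length s" "t \<noteq> t'" "t \<le> t' + 3" "t' \<le> t + 3"
    "third (s ! t) (s ! t') = y" "card {q. q < length s \<and> s ! t \<in> blocked s q} + 51 \<le> length s"
proof -
  let ?m = "length s" and ?P = "completed_pairs s y"
  define E where "E = fst ` ?P \<union> snd ` ?P"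
  define N where "N t = card {q. q < ?m \<and> s ! t \<in> blocked s q}" for t
  have good: "partial_good s" using extremal_partial_good[OF s] .
  then have "distinct s" "set s \<subseteq> X" by (simp_all add: partial_good_def)
  have "34 \<le> card E"
    using card_completed_pairs_endpoints[OF good] extremal_card_completed_pairs_ge[OF s y big]
    by (simp add: E_def)
  have "card X \<le> ?m + 3"
    using extremal_card_missing_le[OF s] card_Diff_subset[OF finite_set \<open>set s \<subseteq> X\<close>]
      card_mono[OF finite_points \<open>set s \<subseteq> X\<close>]
    by (simp add: distinct_card[OF \<open>distinct s\<close>])
  have "E \<subseteq> {..<?m}" by (auto simp: E_def completed_pairs_def)
  then have "(\<Sum>t \<in> E. N t) \<le> 9 * ?m"
    using sum_mono2[OF finite_lessThan \<open>E \<subseteq> {..<?m}\<close>, of N]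
      sum_card_blocking_positions_le[OF \<open>distinct s\<close>]
    by (simp add: N_def)
  obtain t where "t \<in> E" "N t + 51 \<le> ?m"
  proof (rule ccontr)
    assume "\<not> thesis"
    then have "\<And>t. t \<in> E \<Longrightarrow> ?m - 50 \<le> N t" using that by fastforce
    then have "card E * (?m - 50) \<le> (\<Sum>t \<in> E. N t)" using sum_bounded_below[of E "?m - 50" N] by simp
    moreover have "34 * (?m - 50) \<le> card E * (?m - 50)" using \<open>34 \<le> card E\<close> by simp
    ultimately show False using \<open>(\<Sum>t \<in> E. N t) \<le> 9 * ?m\<close> \<open>card X \<le> ?m + 3\<close> big by linarith
  qed
  from \<open>t \<in> E\<close> consider b where "(t, b) \<in> ?P" | a where "(a, t) \<in> ?P" by (auto simp: E_def)
  then show thesis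
  proof cases
    case 1
    then show thesis using that[of t b] \<open>N t + 51 \<le> ?m\<close> by (auto simp: completed_pairs_def N_def)
  next
    case 2
    then show thesis using that[of t a] \<open>N t + 51 \<le> ?m\<close>
      by (auto simp: completed_pairs_def N_def third_commute)
  qed
qed

lemma extremal_covers:
  assumes s: "extremal s" and big: "71 < card X"
  shows "set s = X"
proof (rule ccontr)
  have good: "partial_good s" using extremal_partial_good[OF s] .
  assume "set s \<noteq> X"
  then obtain y where y: "y \<in> X - set s" using good by (auto simp: partial_good_def)
  obtain t t' where t: "t < length s" "t' < length s" "t \<noteq> t'" "t \<le> t' + 3" "t' \<le> t + 3"
      "third (s ! t) (s ! t') = y" "card {q. q < length s \<and> s ! t \<in> blocked s q} + 51 \<le> length s"
    using extremal_obtain_rare_endpoint[OF s y big] by blast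
  then have open_pair: "third (s ! t) (s ! t') \<notin> set s" using y by simp
  obtain q where "q < length s" "q \<notin> swap_obstructions s t t'"
    using exists_position_outside_swap_obstructions[OF good extremal_card_missing_le[OF s]
        t(1-5) open_pair t(7)]
    by blast
  note q = this swap_partner_outside_obstructions[OF good t(1,2) this]
  have "partial_good (s[t := s ! q, q := s ! t])"
    using partial_good_swap[OF good t(1) q(1,3-5)] .
  moreover have "card (open_pairs (s[t := s ! q, q := s ! t])) < card (open_pairs s)"
    using card_open_pairs_swap_less[OF t(1-5) open_pair q(1,3,6,7)] .
  ultimately show False using extremal_fewest_open_pairs[OF s] by fastforce
qed

lemma partial_good_good_sequencing:
  assumes "partial_good s"
  shows "good_sequencing 4 B s"
  unfolding good_sequencing_def
proof (intro allI impI ballI notI)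
  fix i b assume i: "i + 4 \<le> length s" and "b \<in> B" and sub: "b \<subseteq> set (take 4 (drop i s))"
  obtain x y z where b: "b = {x, y, z}" "x \<noteq> y" "y \<noteq> z" "x \<noteq> z"
    using block_subset_card[OF \<open>b \<in> B\<close>] card_3_iff by metis
  let ?w = "take 4 (drop i s)"
  have "x \<in> set ?w" "y \<in> set ?w" "z \<in> set ?w" using sub b by auto
  moreover have "length ?w = 4" using i by simp
  ultimately obtain kx ky kz where k: "kx < 4" "ky < 4" "kz < 4"
    "s ! (i + kx) = x" "s ! (i + ky) = y" "s ! (i + kz) = z"
    using i by (auto simp: in_set_conv_nth)
  then have "window_triple (i + kx) (i + ky) (i + kz)"
    using b unfolding window_triple_def by auto
  then have "{s ! (i + kx), s ! (i + ky), s ! (i + kz)} \<notin> B"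
    using assms k i unfolding partial_good_def by auto
  then show False using k b \<open>b \<in> B\<close> by simp
qed

end

theorem theorem3:
  fixes v :: nat and B :: "nat set set"
  assumes "v > 71"
    and "steiner_triple_system {1..v} B"
  shows "\<exists>xs. sequencing {1..v} xs \<and> good_sequencing 4 B xs"
proof -
  interpret finite_steiner_triple_system "{1..v}" B
    using assms(2) by unfold_locales simp_all
  obtain s where s: "extremal s" using extremal_exists by blast
  then have "partial_good s" "set s = {1..v}"
    using extremal_partial_good[OF s] extremal_covers[OF s] assms(1) by simp_all
  then show ?thesis
    using partial_good_good_sequencing unfolding sequencing_def partial_good_def by blast
qed

end
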